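(* Let $H$ be a one-dimensional summable Hamiltonian. Then for every $k\in\mathbb{N}$ (with $k\ge1$) and every $X\in\{0,1\}^{\mathbb{Z}}$, $$\rho_H(X)=\liminf_{m\to\infty}\frac{H(X([-mk,mk]))}{2mk+1}.$$
   Context: A pattern is a configuration in $\{0,1\}^A$ on a finite set $A\subset\mathbb{Z}$; a one-dimensional Hamiltonian is a translation-invariant assignment of energies $\Phi(p)$ to patterns $p$, and for a finite segment $w$ of a sequence, $H(w)$ is the total energy of all patterns occurring within $w$. $H$ is summable if there is $M>0$ such that for every $i\in\mathbb{Z}$, $\sum_{p\in P_i}|\Phi(p)|<M$, where $P_i$ is the set of finite patterns whose support contains the coordinate $i$. The energy density is $\rho_H(X)=\liminf_{n\to\infty}\frac{H(X([-n,n]))}{2n+1}$, where $X([-n,n])=(X(i))_{i=-n}^n$. *)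

theory Defs
  imports "HOL-Analysis.Analysis"
begin

text \<open>A pattern is a pair (A, c): a finite nonempty support A of integers and a
  configuration c on A with values in {0,1} (encoded as bool); c is normalised
  to be False outside A so that each pattern has a unique representation.\<close>

type_synonym pattern = "int set \<times> (int \<Rightarrow> bool)"

definition is_pattern :: "pattern \<Rightarrow> bool" where
  "is_pattern p \<longleftrightarrow> finite (fst p) \<and> fst p \<noteq> {} \<and> (\<forall>i. i \<notin> fst p \<longrightarrow> \<not> snd p i)"

definition shift_pattern :: "int \<Rightarrow> pattern \<Rightarrow> pattern" where
  "shift_pattern t p = ((\<lambda>i. i + t) ` fst p, (\<lambda>i. snd p (i - t)))"

definition translation_invariant :: "(pattern \<Rightarrow> real) \<Rightarrow> bool" where
  "translation_invariant \<Phi> \<longleftrightarrow> (\<forall>p t. is_pattern p \<longrightarrow> \<Phi> (shift_pattern t p) = \<Phi> p)"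

definition patterns_at :: "int \<Rightarrow> pattern set" where
  "patterns_at i = {p. is_pattern p \<and> i \<in> fst p}"

definition summable_hamiltonian :: "(pattern \<Rightarrow> real) \<Rightarrow> bool" where
  "summable_hamiltonian \<Phi> \<longleftrightarrow>
     (\<exists>M>0. \<forall>i. (\<lambda>p. \<bar>\<Phi> p\<bar>) summable_on patterns_at i
              \<and> (\<Sum>\<^sub>\<infinity>p\<in>patterns_at i. \<bar>\<Phi> p\<bar>) < M)"

definition restr_pattern :: "(int \<Rightarrow> bool) \<Rightarrow> int set \<Rightarrow> pattern" where
  "restr_pattern X A = (A, (\<lambda>i. if i \<in> A then X i else False))"

text \<open>H(X([a,b])): total energy of all patterns occurring within the segment X([a,b]),
  i.e. the patterns X restricted to nonempty subsets of {a..b}.\<close>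

definition H_seg :: "(pattern \<Rightarrow> real) \<Rightarrow> (int \<Rightarrow> bool) \<Rightarrow> int \<Rightarrow> int \<Rightarrow> real" where
  "H_seg \<Phi> X a b = (\<Sum>A \<in> Pow {a..b} - {{}}. \<Phi> (restr_pattern X A))"

definition energy_density :: "(pattern \<Rightarrow> real) \<Rightarrow> (int \<Rightarrow> bool) \<Rightarrow> ereal" where
  "energy_density \<Phi> X =
     Liminf sequentially (\<lambda>n::nat. ereal (H_seg \<Phi> X (- int n) (int n) / (2 * real n + 1)))"

end

theory Submission
  imports Defs "HOL-Real_Asymp.Real_Asymp"
begin

text \<open>If every site carries total absolute energy at most M, then every pattern inside
  [-n, n] but not inside [-j, j] contains one of the 2(n - j) new sites, so
  h n = H(X([-n, n])) satisfies |h n| \<le> (2n + 1) M and |h n - h j| \<le> 2 (n - j) M.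
  With j the largest multiple of k not exceeding n, the averages h n / (2n + 1) and
  h j / (2j + 1) therefore differ by O(k M / n), and the two liminfs coincide.\<close>

definition summable_bound :: "(pattern \<Rightarrow> real) \<Rightarrow> real \<Rightarrow> bool" where
  "summable_bound \<Phi> M \<longleftrightarrow>
     (\<forall>i. (\<lambda>p. \<bar>\<Phi> p\<bar>) summable_on patterns_at i \<and> (\<Sum>\<^sub>\<infinity>p\<in>patterns_at i. \<bar>\<Phi> p\<bar>) \<le> M)"

lemma summable_hamiltonian_imp_summable_bound:
  assumes "summable_hamiltonian \<Phi>"
  obtains M where "summable_bound \<Phi> M"
  using assms unfolding summable_hamiltonian_def summable_bound_def by (meson less_imp_le)

lemma sum_restr_pattern_containing_le:
  assumes "summable_bound \<Phi> M" and "finite D" and "\<And>A. A \<in> D \<Longrightarrow> finite A \<and> i \<in> A"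
  shows "(\<Sum>A\<in>D. \<bar>\<Phi> (restr_pattern X A)\<bar>) \<le> M"
proof -
  have "inj_on (restr_pattern X) D"
    by (rule inj_onI) (metis fst_conv restr_pattern_def)
  then have "(\<Sum>A\<in>D. \<bar>\<Phi> (restr_pattern X A)\<bar>) = (\<Sum>p\<in>restr_pattern X ` D. \<bar>\<Phi> p\<bar>)"
    by (simp add: sum.reindex)
  also have "\<dots> \<le> (\<Sum>\<^sub>\<infinity>p\<in>patterns_at i. \<bar>\<Phi> p\<bar>)"
  proof (rule finite_sum_le_infsum)
    show "(\<lambda>p. \<bar>\<Phi> p\<bar>) summable_on patterns_at i"
      using assms(1) by (simp add: summable_bound_def)
    show "restr_pattern X ` D \<subseteq> patterns_at i"
      using assms(3) by (fastforce simp: patterns_at_def is_pattern_def restr_pattern_def)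
  qed (use assms(2) in auto)
  also have "\<dots> \<le> M"
    using assms(1) by (simp add: summable_bound_def)
  finally show ?thesis .
qed

lemma sum_restr_pattern_meeting_le:
  assumes "summable_bound \<Phi> M" and "finite D" and "finite I"
    and "\<And>A. A \<in> D \<Longrightarrow> finite A \<and> A \<inter> I \<noteq> {}"
  shows "(\<Sum>A\<in>D. \<bar>\<Phi> (restr_pattern X A)\<bar>) \<le> real (card I) * M"
proof -
  define f where "f A = \<bar>\<Phi> (restr_pattern X A)\<bar>" for A
  have "(\<Sum>A\<in>D. f A) \<le> (\<Sum>A\<in>D. \<Sum>i\<in>I \<inter> A. f A)"
  proof (rule sum_mono)
    fix A assume "A \<in> D"
    then have "card (I \<inter> A) \<ge> 1"
      using assms(3,4) by (metis Int_commute card_0_eq finite_Int less_one not_le)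
    then show "f A \<le> (\<Sum>i\<in>I \<inter> A. f A)"
      by (simp add: f_def mult_le_cancel_right1)
  qed
  also have "\<dots> = (\<Sum>A\<in>D. \<Sum>i\<in>I. if i \<in> A then f A else 0)"
    by (rule sum.cong[OF refl], rule sum.inter_restrict[OF assms(3)])
  also have "\<dots> = (\<Sum>i\<in>I. \<Sum>A\<in>{A\<in>D. i \<in> A}. f A)"
    using assms(2) by (subst sum.swap) (simp add: sum.inter_filter)
  also have "\<dots> \<le> (\<Sum>i\<in>I. M)"
    using assms(1,2,4) unfolding f_def
    by (intro sum_mono sum_restr_pattern_containing_le) auto
  finally show ?thesis
    by (simp add: f_def)
qed

lemma abs_H_seg_le:
  assumes "summable_bound \<Phi> M"
  shows "\<bar>H_seg \<Phi> X a b\<bar> \<le> real (card {a..b}) * M"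
proof -
  have "\<bar>H_seg \<Phi> X a b\<bar> \<le> (\<Sum>A\<in>Pow {a..b} - {{}}. \<bar>\<Phi> (restr_pattern X A)\<bar>)"
    unfolding H_seg_def by (rule sum_abs)
  also have "\<dots> \<le> real (card {a..b}) * M"
    using assms by (rule sum_restr_pattern_meeting_le) (auto intro: finite_subset)
  finally show ?thesis .
qed

lemma abs_H_seg_diff_le:
  assumes "summable_bound \<Phi> M" and "{a..b} \<subseteq> {a'..b'}"
  shows "\<bar>H_seg \<Phi> X a' b' - H_seg \<Phi> X a b\<bar> \<le> real (card ({a'..b'} - {a..b})) * M"
proof -
  let ?new = "(Pow {a'..b'} - {{}}) - (Pow {a..b} - {{}})"
  have "H_seg \<Phi> X a' b' - H_seg \<Phi> X a b = (\<Sum>A\<in>?new. \<Phi> (restr_pattern X A))"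
    unfolding H_seg_def using assms(2) by (subst sum_diff) auto
  then have "\<bar>H_seg \<Phi> X a' b' - H_seg \<Phi> X a b\<bar> \<le> (\<Sum>A\<in>?new. \<bar>\<Phi> (restr_pattern X A)\<bar>)"
    by (simp add: sum_abs)
  also have "\<dots> \<le> real (card ({a'..b'} - {a..b})) * M"
    using assms(1) by (rule sum_restr_pattern_meeting_le) (auto intro: finite_subset)
  finally show ?thesis .
qed

lemma abs_average_diff_le:
  fixes x y M s t :: real
  assumes "0 \<le> s" and "s \<le> t"
    and "\<bar>y\<bar> \<le> (2 * s + 1) * M" and "\<bar>x - y\<bar> \<le> 2 * (t - s) * M"
  shows "\<bar>x / (2 * t + 1) - y / (2 * s + 1)\<bar> \<le> 4 * (t - s) * M / (2 * t + 1)"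
proof -
  define u where "u = y / (2 * s + 1)"
  have "x / (2 * t + 1) - u = ((x - y) - u * (2 * (t - s))) / (2 * t + 1)"
    using assms(1,2) by (simp add: u_def field_simps)
  moreover have "\<bar>u\<bar> \<le> M"
    using assms(1,3) by (simp add: u_def divide_le_eq mult.commute)
  then have "\<bar>u * (2 * (t - s))\<bar> \<le> M * (2 * (t - s))"
    using mult_right_mono[of "\<bar>u\<bar>" M "2 * (t - s)"] assms(2) by (simp add: abs_mult)
  then have "\<bar>(x - y) - u * (2 * (t - s))\<bar> \<le> 4 * (t - s) * M"
    using assms(4) abs_triangle_ineq4[of "x - y" "u * (2 * (t - s))"] by (simp add: algebra_simps)
  ultimately show ?thesis
    using assms(1,2) by (simp add: u_def divide_right_mono)
qed

lemma liminf_comp_div: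
  fixes B :: "nat \<Rightarrow> 'a::complete_linorder"
  assumes "k > 0"
  shows "liminf (\<lambda>n. B (n div k)) = liminf B"
proof (rule antisym)
  have "strict_mono (\<lambda>m. m * k)"
    using assms by (simp add: strict_mono_def)
  from liminf_subseq_mono[OF this, of "\<lambda>n. B (n div k)"]
  show "liminf (\<lambda>n. B (n div k)) \<le> liminf B"
    using assms by (simp add: comp_def)
  show "liminf B \<le> liminf (\<lambda>n. B (n div k))"
  proof (unfold le_Liminf_iff, intro allI impI)
    fix y assume "y < liminf B"
    then have "eventually (\<lambda>n. y < B n) sequentially"
      using le_Liminf_iff[of "liminf B" sequentially B] by blast
    then show "eventually (\<lambda>n. y < B (n div k)) sequentially"
      by (rule eventually_compose_filterlim[OF _ filterlim_at_top_div_const_nat[OF assms]])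
  qed
qed

lemma liminf_average_multiples:
  fixes h :: "nat \<Rightarrow> real" and M :: real
  assumes "k > 0"
    and bound: "\<And>n. \<bar>h n\<bar> \<le> (2 * real n + 1) * M"
    and increment: "\<And>j n. j \<le> n \<Longrightarrow> \<bar>h n - h j\<bar> \<le> 2 * (real n - real j) * M"
  shows "liminf (\<lambda>n. ereal (h n / (2 * real n + 1)))
       = liminf (\<lambda>m. ereal (h (m * k) / (2 * real (m * k) + 1)))"
proof -
  define a where "a n = h n / (2 * real n + 1)" for n
  define j where "j n = n div k * k" for n
  have close: "\<bar>a n - a (j n)\<bar> \<le> 4 * real k * M / (2 * real n + 1)" for n
  proof -
    have "n = j n + n mod k"
      by (simp add: j_def)
    then have "j n \<le> n" and "n < j n + k"
      using mod_less_divisor[OF assms(1), of n] by linarith+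
    then have "\<bar>a n - a (j n)\<bar> \<le> 4 * (real n - real (j n)) * M / (2 * real n + 1)"
      unfolding a_def by (intro abs_average_diff_le bound increment) auto
    also have "\<dots> \<le> 4 * real k * M / (2 * real n + 1)"
      using \<open>n < j n + k\<close> bound[of 0] by (intro divide_right_mono mult_right_mono) auto
    finally show ?thesis .
  qed
  have "(\<lambda>n. 4 * real k * M / (2 * real n + 1)) \<longlonglongrightarrow> 0"
    by real_asymp
  then have "(\<lambda>n. a n - a (j n)) \<longlonglongrightarrow> 0"
    by (rule Lim_null_comparison[rotated]) (simp add: close always_eventually)
  then have "(\<lambda>n. ereal (a n - a (j n))) \<longlonglongrightarrow> ereal 0"
    by (rule tendsto_ereal)
  then have "liminf (\<lambda>n. ereal (a n - a (j n)) + ereal (a (j n)))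
      = ereal 0 + liminf (\<lambda>n. ereal (a (j n)))"
    by (rule ereal_liminf_lim_add) simp
  then have "liminf (\<lambda>n. ereal (a n)) = liminf (\<lambda>n. ereal (a (n div k * k)))"
    by (simp add: j_def)
  also have "\<dots> = liminf (\<lambda>m. ereal (a (m * k)))"
    by (rule liminf_comp_div[OF assms(1)])
  finally show ?thesis
    unfolding a_def .
qed

theorem lemma4p6:
  fixes \<Phi> :: "pattern \<Rightarrow> real" and k :: nat and X :: "int \<Rightarrow> bool"
  assumes "translation_invariant \<Phi>"
    and "summable_hamiltonian \<Phi>"
    and "k \<ge> 1"
  shows "energy_density \<Phi> X =
    Liminf sequentially (\<lambda>m::nat. ereal (H_seg \<Phi> X (- int (m * k)) (int (m * k))
                                          / (2 * real (m * k) + 1)))"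
proof -
  obtain M where M: "summable_bound \<Phi> M"
    using assms(2) by (rule summable_hamiltonian_imp_summable_bound)
  have "\<bar>H_seg \<Phi> X (- int n) (int n)\<bar> \<le> (2 * real n + 1) * M" for n
    using abs_H_seg_le[OF M, of X "- int n" "int n"] by simp
  moreover have "\<bar>H_seg \<Phi> X (- int n) (int n) - H_seg \<Phi> X (- int j) (int j)\<bar>
      \<le> 2 * (real n - real j) * M" if "j \<le> n" for j n
  proof -
    have "{- int j..int j} \<subseteq> {- int n..int n}"
      using that by auto
    moreover from this have "card ({- int n..int n} - {- int j..int j}) = 2 * (n - j)"
      using that by (simp add: card_Diff_subset)
    ultimately show ?thesis
      using abs_H_seg_diff_le[OF M, of "- int j" "int j" "- int n" "int n" X] that by simp
  qed
  ultimately show ?thesis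
    unfolding energy_density_def using assms(3) by (intro liminf_average_multiples) auto
qed

end
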